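(* Let $d\ge1$ and let $\tau$ be a (closed) simplex in $\mathbb{R}^d$. Then the characteristic function $\chi_\tau$ of $\tau$ can be written as a function in $\mathrm{HNN}_k$ with $k\sim\mathcal O(\lceil\log_2(d+1)\rceil)$ and size $s\sim\mathcal O(2(d+1))$.
   Context: $\mathrm{HNN}_k$ denotes the class of functions $f:\mathbb{R}^d\to\mathbb{R}$ of the form $f(x)=\Theta^k\circ\sigma\circ\Theta^{k-1}\circ\sigma\circ\cdots\circ\Theta^1\circ\sigma_s\circ\Theta^0(x)$, where $\Theta^j:\mathbb{R}^{n_j}\to\mathbb{R}^{n_{j+1}}$ are affine maps, $n_0=d$, $n_{k+1}=1$, $\sigma=\mathrm{ReLU}$ and $\sigma_s=H$ is the Heaviside step function ($H(t)=1$ for $t\ge0$, $H(t)=0$ for $t<0$), each activation applied componentwise. $k$ is the number of hidden layers and the size of the network is $s=\sum_{0\le i\le k}n_i$. *)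

theory Defs
  imports Complex_Main
begin

text \<open>Points of R^d are represented as functions nat => real that vanish at all
  coordinates j >= d (so that the dimension d can vary inside statements).\<close>

definition in_Rd :: "nat \<Rightarrow> (nat \<Rightarrow> real) \<Rightarrow> bool" where
  "in_Rd d x \<longleftrightarrow> (\<forall>j\<ge>d. x j = 0)"

definition heaviside :: "real \<Rightarrow> real" where
  "heaviside t = (if t \<ge> 0 then 1 else 0)"

definition relu :: "real \<Rightarrow> real" where
  "relu t = max 0 t"

definition affmap :: "nat \<Rightarrow> nat \<Rightarrow> (nat \<Rightarrow> nat \<Rightarrow> real) \<Rightarrow> (nat \<Rightarrow> real)
    \<Rightarrow> (nat \<Rightarrow> real) \<Rightarrow> (nat \<Rightarrow> real)" where
  "affmap m n W b x = (\<lambda>i. if i < n then (\<Sum>l<m. W i l * x l) + b i else 0)"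

definition act :: "(real \<Rightarrow> real) \<Rightarrow> nat \<Rightarrow> (nat \<Rightarrow> real) \<Rightarrow> (nat \<Rightarrow> real)" where
  "act g n y = (\<lambda>i. if i < n then g (y i) else 0)"

fun hnn_hidden :: "(nat \<Rightarrow> nat) \<Rightarrow> (nat \<Rightarrow> nat \<Rightarrow> nat \<Rightarrow> real) \<Rightarrow> (nat \<Rightarrow> nat \<Rightarrow> real)
    \<Rightarrow> nat \<Rightarrow> (nat \<Rightarrow> real) \<Rightarrow> (nat \<Rightarrow> real)" where
  "hnn_hidden ns W B 0 x = x"
| "hnn_hidden ns W B (Suc 0) x =
     act heaviside (ns 1) (affmap (ns 0) (ns 1) (W 0) (B 0) x)"
| "hnn_hidden ns W B (Suc (Suc j)) x =
     act relu (ns (Suc (Suc j)))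
       (affmap (ns (Suc j)) (ns (Suc (Suc j))) (W (Suc j)) (B (Suc j)) (hnn_hidden ns W B (Suc j) x))"

definition hnn_eval :: "(nat \<Rightarrow> nat) \<Rightarrow> (nat \<Rightarrow> nat \<Rightarrow> nat \<Rightarrow> real) \<Rightarrow> (nat \<Rightarrow> nat \<Rightarrow> real)
    \<Rightarrow> nat \<Rightarrow> (nat \<Rightarrow> real) \<Rightarrow> real" where
  "hnn_eval ns W B k x = affmap (ns k) 1 (W k) (B k) (hnn_hidden ns W B k x) 0"

definition HNN :: "nat \<Rightarrow> nat \<Rightarrow> nat \<Rightarrow> ((nat \<Rightarrow> real) \<Rightarrow> real) \<Rightarrow> bool" where
  "HNN d k s f \<longleftrightarrow> k \<ge> 1 \<and>
     (\<exists>ns W B. ns 0 = d \<and> ns (Suc k) = 1 \<and> (\<Sum>i\<le>k. ns i) = s \<and>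
        (\<forall>x. in_Rd d x \<longrightarrow> f x = hnn_eval ns W B k x))"

text \<open>tau is a (closed, d-dimensional) simplex in R^d: the convex hull of d+1
  affinely independent points v_0,...,v_d.\<close>
definition is_simplex :: "nat \<Rightarrow> (nat \<Rightarrow> real) set \<Rightarrow> bool" where
  "is_simplex d \<tau> \<longleftrightarrow> (\<exists>v :: nat \<Rightarrow> nat \<Rightarrow> real.
     (\<forall>i\<le>d. in_Rd d (v i)) \<and>
     (\<forall>c :: nat \<Rightarrow> real. (\<Sum>i\<le>d. c i) = 0 \<and> (\<forall>j<d. (\<Sum>i\<le>d. c i * v i j) = 0)
          \<longrightarrow> (\<forall>i\<le>d. c i = 0)) \<and>
     \<tau> = {x. in_Rd d x \<and> (\<exists>lam :: nat \<Rightarrow> real. (\<forall>i\<le>d. lam i \<ge> 0) \<and> (\<Sum>i\<le>d. lam i) = 1 \<and>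
                 (\<forall>j<d. x j = (\<Sum>i\<le>d. lam i * v i j)))})"

definition charfun :: "'a set \<Rightarrow> 'a \<Rightarrow> real" where
  "charfun A x = (if x \<in> A then 1 else 0)"

end

theory Submission
  imports Defs "Jordan_Normal_Form.Determinant"
begin

text \<open>The barycentric coordinates of a point with respect to the vertices of a simplex are
  affine functions of the point, and the point lies in the simplex exactly when all of them are
  nonnegative. A Heaviside layer of width \<open>d + 1\<close> turns these coordinates into 0/1
  indicators, and a single ReLU neuron computing \<open>relu (\<Sum>\<^sub>i h\<^sub>i - d)\<close> takes
  their conjunction. Hence two hidden layers and size \<open>2 (d + 1)\<close> suffice, well within the
  claimed bounds.\<close>

lemma relu_sum_indicators:
  fixes h :: "nat \<Rightarrow> real"
  assumes "\<And>i. i < n \<Longrightarrow> h i = 0 \<or> h i = 1"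
  shows "relu ((\<Sum>i<n. h i) + 1 - real n) = (if \<forall>i<n. h i = 1 then 1 else 0)"
proof (cases "\<forall>i<n. h i = 1")
  case True
  then show ?thesis by (simp add: relu_def)
next
  case False
  then obtain i0 where "i0 < n" "h i0 = 0" using assms by blast
  then have "1 \<le> (\<Sum>i<n. 1 - h i)"
    using member_le_sum[of i0 "{..<n}" "\<lambda>i. 1 - h i"] assms by force
  then show ?thesis using False by (simp add: relu_def sum_subtractf)
qed

lemma HNN_charfun_halfspace_intersection:
  fixes P :: "(nat \<Rightarrow> real) set"
  assumes P_iff: "\<And>x. in_Rd d x \<Longrightarrow> x \<in> P \<longleftrightarrow> (\<forall>i<n. (\<Sum>l<d. M i l * x l) + b i \<ge> 0)"
  shows "HNN d 2 (d + n + 1) (charfun P)"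
proof -
  define ns :: "nat \<Rightarrow> nat" where "ns i = (if i = 0 then d else if i = 1 then n else 1)" for i
  define W :: "nat \<Rightarrow> nat \<Rightarrow> nat \<Rightarrow> real" where "W t = (if t = 0 then M else (\<lambda>_ _. 1))" for t
  define B :: "nat \<Rightarrow> nat \<Rightarrow> real"
    where "B t = (if t = 0 then b else if t = 1 then (\<lambda>_. 1 - real n) else (\<lambda>_. 0))" for t
  have "hnn_eval ns W B 2 x = charfun P x" if "in_Rd d x" for x
  proof -
    define h where "h i = heaviside ((\<Sum>l<d. M i l * x l) + b i)" for i
    have "hnn_eval ns W B 2 x = relu ((\<Sum>i<n. h i) + 1 - real n)"
      by (simp add: numeral_2_eq_2 hnn_eval_def affmap_def act_def ns_def W_def B_def h_def
          add_diff_eq)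
    also have "\<dots> = (if \<forall>i<n. h i = 1 then 1 else 0)"
      by (rule relu_sum_indicators) (simp add: h_def heaviside_def)
    also have "\<dots> = charfun P x"
      using P_iff[OF that] by (auto simp: charfun_def h_def heaviside_def)
    finally show ?thesis .
  qed
  moreover have "(\<Sum>i\<le>2. ns i) = d + n + 1"
    by (simp add: ns_def numeral_2_eq_2)
  ultimately show ?thesis
    unfolding HNN_def by (intro conjI exI[of _ ns] exI[of _ W] exI[of _ B]) (auto simp: ns_def)
qed

definition vertex_mat :: "nat \<Rightarrow> (nat \<Rightarrow> nat \<Rightarrow> real) \<Rightarrow> real mat" where
  "vertex_mat d v = mat (Suc d) (Suc d) (\<lambda>(j, i). if j < d then v i j else 1)"

definition hom_vec :: "nat \<Rightarrow> (nat \<Rightarrow> real) \<Rightarrow> real vec" where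
  "hom_vec d x = vec (Suc d) (\<lambda>j. if j < d then x j else 1)"

lemma vertex_mat_carrier: "vertex_mat d v \<in> carrier_mat (Suc d) (Suc d)"
  by (simp add: vertex_mat_def)

lemma hom_vec_carrier: "hom_vec d x \<in> carrier_vec (Suc d)"
  by (simp add: hom_vec_def)

lemma index_vertex_mat_mult_vec:
  assumes "j < Suc d"
  shows "(vertex_mat d v *\<^sub>v vec (Suc d) c) $ j =
    (if j < d then (\<Sum>i\<le>d. c i * v i j) else (\<Sum>i\<le>d. c i))"
  using assms
  by (simp add: vertex_mat_def scalar_prod_def atLeast0LessThan lessThan_Suc_atMost[symmetric]
      mult.commute)

lemma vertex_mat_mult_vec_eq_hom_vec_iff:
  "vertex_mat d v *\<^sub>v vec (Suc d) c = hom_vec d x \<longleftrightarrow>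
    (\<Sum>i\<le>d. c i) = 1 \<and> (\<forall>j<d. x j = (\<Sum>i\<le>d. c i * v i j))" (is "?lhs \<longleftrightarrow> ?rhs")
proof -
  have "?lhs \<longleftrightarrow> (\<forall>j<Suc d. (vertex_mat d v *\<^sub>v vec (Suc d) c) $ j = hom_vec d x $ j)"
    by (simp only: vec_eq_iff dim_mult_mat_vec carrier_matD(1)[OF vertex_mat_carrier]
        carrier_vecD[OF hom_vec_carrier] simp_thms)
  also have "\<dots> \<longleftrightarrow> ?rhs"
    by (auto simp: index_vertex_mat_mult_vec hom_vec_def less_Suc_eq)
  finally show ?thesis .
qed

lemma det_vertex_mat_nonzero:
  assumes "\<forall>c :: nat \<Rightarrow> real. (\<Sum>i\<le>d. c i) = 0 \<and> (\<forall>j<d. (\<Sum>i\<le>d. c i * v i j) = 0)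
             \<longrightarrow> (\<forall>i\<le>d. c i = 0)"
  shows "det (vertex_mat d v) \<noteq> 0"
proof
  assume "det (vertex_mat d v) = 0"
  then obtain u where u: "u \<in> carrier_vec (Suc d)" "u \<noteq> 0\<^sub>v (Suc d)"
    and kernel: "vertex_mat d v *\<^sub>v u = 0\<^sub>v (Suc d)"
    using det_0_iff_vec_prod_zero_field[OF vertex_mat_carrier] by blast
  define c where "c i = u $ i" for i
  have "u = vec (Suc d) c"
    using u(1) by (auto simp: c_def)
  then have entry: "(vertex_mat d v *\<^sub>v vec (Suc d) c) $ j = 0" if "j < Suc d" for j
    using kernel that by simp
  have "(\<Sum>i\<le>d. c i) = 0"
    using entry[of d] index_vertex_mat_mult_vec[of d d v c] by simp
  moreover have "(\<Sum>i\<le>d. c i * v i j) = 0" if "j < d" for j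
    using entry[of j] index_vertex_mat_mult_vec[of j d v c] that by simp
  ultimately have "\<forall>i\<le>d. c i = 0" using assms by blast
  then have "u = 0\<^sub>v (Suc d)" using u(1) by (intro eq_vecI) (auto simp: c_def)
  with u(2) show False ..
qed

lemma mult_mat_vec_eq_iff_inverse:
  fixes A A' :: "'a :: comm_ring_1 mat"
  assumes A: "A \<in> carrier_mat n n" and A': "A' \<in> carrier_mat n n"
    and inv: "A' * A = 1\<^sub>m n" "A * A' = 1\<^sub>m n"
    and c: "c \<in> carrier_vec n" and y: "y \<in> carrier_vec n"
  shows "A *\<^sub>v c = y \<longleftrightarrow> c = A' *\<^sub>v y"
proof
  assume "A *\<^sub>v c = y"
  then have "A' *\<^sub>v y = (A' * A) *\<^sub>v c"
    using A A' c by simp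
  then show "c = A' *\<^sub>v y"
    using inv c by simp
next
  assume "c = A' *\<^sub>v y"
  then have "A *\<^sub>v c = (A * A') *\<^sub>v y"
    using A A' y by simp
  then show "A *\<^sub>v c = y"
    using inv y by simp
qed

lemma simplex_halfspace_intersection:
  assumes "is_simplex d \<tau>"
  obtains M b where
    "\<And>x. in_Rd d x \<Longrightarrow> x \<in> \<tau> \<longleftrightarrow> (\<forall>i<Suc d. (\<Sum>l<d. M i l * x l) + b i \<ge> 0)"
proof -
  obtain v :: "nat \<Rightarrow> nat \<Rightarrow> real" where
    indep: "\<forall>c :: nat \<Rightarrow> real. (\<Sum>i\<le>d. c i) = 0 \<and> (\<forall>j<d. (\<Sum>i\<le>d. c i * v i j) = 0)
          \<longrightarrow> (\<forall>i\<le>d. c i = 0)" and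
    \<tau>: "\<tau> = {x. in_Rd d x \<and> (\<exists>lam. (\<forall>i\<le>d. lam i \<ge> 0) \<and> (\<Sum>i\<le>d. lam i) = 1 \<and>
                 (\<forall>j<d. x j = (\<Sum>i\<le>d. lam i * v i j)))}"
    using assms unfolding is_simplex_def by blast
  let ?A = "vertex_mat d v"
  obtain A' where
    A': "A' \<in> carrier_mat (Suc d) (Suc d)" "A' * ?A = 1\<^sub>m (Suc d)" "?A * A' = 1\<^sub>m (Suc d)"
    using det_non_zero_imp_unit[OF vertex_mat_carrier det_vertex_mat_nonzero[OF indep], of "()"]
    unfolding Units_def ring_mat_def by auto
  define bary where "bary x = A' *\<^sub>v hom_vec d x" for x
  have bary_carrier: "bary x \<in> carrier_vec (Suc d)" for x
    using A'(1) hom_vec_carrier by (simp add: bary_def)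
  have bary_nth: "bary x $ i = (\<Sum>l<d. A' $$ (i, l) * x l) + A' $$ (i, d)" if "i < Suc d" for x i
    using that A'(1)
    by (simp add: bary_def hom_vec_def scalar_prod_def atLeast0LessThan if_distrib sum.If_cases)
  have "x \<in> \<tau> \<longleftrightarrow> (\<forall>i<Suc d. bary x $ i \<ge> 0)" if "in_Rd d x" for x
  proof -
    have "x \<in> \<tau> \<longleftrightarrow> (\<exists>lam. (\<forall>i\<le>d. lam i \<ge> 0) \<and> ?A *\<^sub>v vec (Suc d) lam = hom_vec d x)"
      using that by (simp add: \<tau> vertex_mat_mult_vec_eq_hom_vec_iff)
    also have "\<dots> \<longleftrightarrow> (\<exists>lam. (\<forall>i\<le>d. lam i \<ge> 0) \<and> vec (Suc d) lam = bary x)"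
      using mult_mat_vec_eq_iff_inverse[OF vertex_mat_carrier A' _ hom_vec_carrier]
      by (simp add: bary_def)
    also have "\<dots> \<longleftrightarrow> (\<forall>i<Suc d. bary x $ i \<ge> 0)"
    proof
      assume "\<exists>lam. (\<forall>i\<le>d. lam i \<ge> 0) \<and> vec (Suc d) lam = bary x"
      then show "\<forall>i<Suc d. bary x $ i \<ge> 0" by (metis index_vec less_Suc_eq_le)
    next
      assume "\<forall>i<Suc d. bary x $ i \<ge> 0"
      moreover have "vec (Suc d) (\<lambda>i. bary x $ i) = bary x"
        using bary_carrier[of x] by (intro eq_vecI) auto
      ultimately show "\<exists>lam. (\<forall>i\<le>d. lam i \<ge> 0) \<and> vec (Suc d) lam = bary x"
        by (intro exI[of _ "\<lambda>i. bary x $ i"]) auto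
    qed
    finally show ?thesis .
  qed
  then show ?thesis
    by (intro that[of "\<lambda>i l. A' $$ (i, l)" "\<lambda>i. A' $$ (i, d)"]) (simp add: bary_nth)
qed

theorem mainTheorem12:
  "\<exists>C :: real. \<forall>d :: nat. \<forall>\<tau>. d \<ge> 1 \<and> is_simplex d \<tau> \<longrightarrow>
     (\<exists>k s. real k \<le> C * real_of_int \<lceil>log 2 (real d + 1)\<rceil> \<and>
            real s \<le> C * (2 * (real d + 1)) \<and>
            HNN d k s (charfun \<tau>))"
proof (rule exI[of _ 2], intro allI impI)
  fix d :: nat and \<tau> :: "(nat \<Rightarrow> real) set"
  assume "d \<ge> 1 \<and> is_simplex d \<tau>"
  then have "d \<ge> 1" and "is_simplex d \<tau>" by auto
  obtain M b where "\<And>x. in_Rd d x \<Longrightarrow> x \<in> \<tau> \<longleftrightarrow> (\<forall>i<Suc d. (\<Sum>l<d. M i l * x l) + b i \<ge> 0)"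
    using simplex_halfspace_intersection[OF \<open>is_simplex d \<tau>\<close>] by blast
  then have "HNN d 2 (d + Suc d + 1) (charfun \<tau>)"
    by (rule HNN_charfun_halfspace_intersection)
  moreover have "1 \<le> \<lceil>log 2 (real d + 1)\<rceil>"
    using \<open>d \<ge> 1\<close> by simp
  ultimately show "\<exists>k s. real k \<le> 2 * real_of_int \<lceil>log 2 (real d + 1)\<rceil> \<and>
      real s \<le> 2 * (2 * (real d + 1)) \<and> HNN d k s (charfun \<tau>)"
    by (intro exI[of _ 2] exI[of _ "d + Suc d + 1"]) auto
qed

end
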